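(* In a finite $(3+1)$-free poset $P$, every top of a tangle is matched to exactly one bottom of a tangle, and every bottom of a tangle is matched to exactly one top of a tangle. That is, the matching relation is a perfect matching between the tops of tangles and the bottoms of tangles of $P$.
   Context: A poset $P$ is $(3+1)$-free if there are no $a,b,c,d\in P$ with $a<b<c$ and $d$ incomparable to each of $a,b,c$. For $a\in P$ let $D_a=\{x\in P:x<a\}$, $U_a=\{x\in P:x>a\}$. Write $a\mathrel{\top}b$ if neither of $D_a,D_b$ contains the other, and $a\mathrel{\bot}b$ if neither of $U_a,U_b$ contains the other. A top of a tangle is a subset $A\subseteq P$ with $|A|\ge 2$ which is a connected component of the graph on vertex set $P$ whose edges are the pairs $\{a,b\}$ with $a\mathrel{\top}b$; a bottom of a tangle is a subset $B\subseteq P$ with $|B|\ge2$ which is a connected component of the analogous graph for $\bot$. A top of a tangle $A$ and a bottom of a tangle $B$ are matched if there exist distinct $a_1,a_2\in A$ and $b_1,b_2\in B$ with $b_1<a_1$, $b_2<a_2$, and each of the pairs $\{a_1,a_2\},\{b_1,b_2\},\{b_1,a_2\},\{b_2,a_1\}$ incomparable (an induced $(2+2)$ subposet with top vertices in $A$ and bottom vertices in $B$). *)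

theory Defs
  imports Main
begin

definition strict_poset :: "'a set \<Rightarrow> ('a \<Rightarrow> 'a \<Rightarrow> bool) \<Rightarrow> bool" where
  "strict_poset P lt \<longleftrightarrow>
     (\<forall>x\<in>P. \<not> lt x x) \<and>
     (\<forall>x\<in>P. \<forall>y\<in>P. \<forall>z\<in>P. lt x y \<longrightarrow> lt y z \<longrightarrow> lt x z)"

definition incomp :: "('a \<Rightarrow> 'a \<Rightarrow> bool) \<Rightarrow> 'a \<Rightarrow> 'a \<Rightarrow> bool" where
  "incomp lt x y \<longleftrightarrow> x \<noteq> y \<and> \<not> lt x y \<and> \<not> lt y x"

definition three_one_free :: "'a set \<Rightarrow> ('a \<Rightarrow> 'a \<Rightarrow> bool) \<Rightarrow> bool" where
  "three_one_free P lt \<longleftrightarrow>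
     \<not> (\<exists>a\<in>P. \<exists>b\<in>P. \<exists>c\<in>P. \<exists>d\<in>P. lt a b \<and> lt b c \<and>
          incomp lt d a \<and> incomp lt d b \<and> incomp lt d c)"

definition down_set :: "'a set \<Rightarrow> ('a \<Rightarrow> 'a \<Rightarrow> bool) \<Rightarrow> 'a \<Rightarrow> 'a set" where
  "down_set P lt a = {x\<in>P. lt x a}"

definition up_set :: "'a set \<Rightarrow> ('a \<Rightarrow> 'a \<Rightarrow> bool) \<Rightarrow> 'a \<Rightarrow> 'a set" where
  "up_set P lt a = {x\<in>P. lt a x}"

definition top_rel :: "'a set \<Rightarrow> ('a \<Rightarrow> 'a \<Rightarrow> bool) \<Rightarrow> 'a \<Rightarrow> 'a \<Rightarrow> bool" where
  "top_rel P lt a b \<longleftrightarrow>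
     \<not> down_set P lt a \<subseteq> down_set P lt b \<and> \<not> down_set P lt b \<subseteq> down_set P lt a"

definition bot_rel :: "'a set \<Rightarrow> ('a \<Rightarrow> 'a \<Rightarrow> bool) \<Rightarrow> 'a \<Rightarrow> 'a \<Rightarrow> bool" where
  "bot_rel P lt a b \<longleftrightarrow>
     \<not> up_set P lt a \<subseteq> up_set P lt b \<and> \<not> up_set P lt b \<subseteq> up_set P lt a"

definition component :: "'a set \<Rightarrow> ('a \<Rightarrow> 'a \<Rightarrow> bool) \<Rightarrow> 'a set \<Rightarrow> bool" where
  "component P E C \<longleftrightarrow>
     (\<exists>v\<in>P. C = {w. (\<lambda>x y. x \<in> P \<and> y \<in> P \<and> E x y)\<^sup>*\<^sup>* v w})"

definition tangle_top :: "'a set \<Rightarrow> ('a \<Rightarrow> 'a \<Rightarrow> bool) \<Rightarrow> 'a set \<Rightarrow> bool" where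
  "tangle_top P lt A \<longleftrightarrow> card A \<ge> 2 \<and> component P (top_rel P lt) A"

definition tangle_bottom :: "'a set \<Rightarrow> ('a \<Rightarrow> 'a \<Rightarrow> bool) \<Rightarrow> 'a set \<Rightarrow> bool" where
  "tangle_bottom P lt B \<longleftrightarrow> card B \<ge> 2 \<and> component P (bot_rel P lt) B"

definition matched :: "('a \<Rightarrow> 'a \<Rightarrow> bool) \<Rightarrow> 'a set \<Rightarrow> 'a set \<Rightarrow> bool" where
  "matched lt A B \<longleftrightarrow>
     (\<exists>a1\<in>A. \<exists>a2\<in>A. \<exists>b1\<in>B. \<exists>b2\<in>B. a1 \<noteq> a2 \<and> b1 \<noteq> b2 \<and>
        lt b1 a1 \<and> lt b2 a2 \<and>
        incomp lt a1 a2 \<and> incomp lt b1 b2 \<and> incomp lt b1 a2 \<and> incomp lt b2 a1)"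

end

theory Submission
  imports Defs
begin

text \<open>An edge a1 \<top> a2 is always witnessed by an induced 2+2 with tops a1, a2: take b1 < a1 not
below a2 and b2 < a2 not below a1. The bottoms of an induced 2+2 are joined by \<bot>. Two induced 2+2s
sharing a top have bottoms joined by a \<bot>-path of length at most two, and propagating this along
\<top>-paths shows that all induced 2+2s with tops in one top of a tangle have their bottoms in a single
component of \<bot>. This gives each top of a tangle exactly one matched bottom; reversing the order
gives the other half.\<close>

definition induced_2_2 :: "('a \<Rightarrow> 'a \<Rightarrow> bool) \<Rightarrow> 'a \<Rightarrow> 'a \<Rightarrow> 'a \<Rightarrow> 'a \<Rightarrow> bool" where
  "induced_2_2 lt a1 a2 b1 b2 \<longleftrightarrow> lt b1 a1 \<and> lt b2 a2 \<and>
     incomp lt a1 a2 \<and> incomp lt b1 b2 \<and> incomp lt b1 a2 \<and> incomp lt b2 a1"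

abbreviation edge_on :: "'a set \<Rightarrow> ('a \<Rightarrow> 'a \<Rightarrow> bool) \<Rightarrow> 'a \<Rightarrow> 'a \<Rightarrow> bool" where
  "edge_on P E \<equiv> \<lambda>x y. x \<in> P \<and> y \<in> P \<and> E x y"

abbreviation reach :: "'a set \<Rightarrow> ('a \<Rightarrow> 'a \<Rightarrow> bool) \<Rightarrow> 'a \<Rightarrow> 'a \<Rightarrow> bool" where
  "reach P E \<equiv> (edge_on P E)\<^sup>*\<^sup>*"

lemma reach_sym:
  assumes sym: "\<And>x y. E x y \<Longrightarrow> E y x" and "reach P E x y"
  shows "reach P E y x"
  using assms(2)
proof (induction rule: rtranclp_induct)
  case (step y z)
  then show ?case
    using sym by (blast intro: converse_rtranclp_into_rtranclp)
qed simp

lemma reach_in_carrier: "reach P E x y \<Longrightarrow> x \<in> P \<Longrightarrow> y \<in> P"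
  by (induction rule: rtranclp_induct) auto

lemma component_reach_class: "x \<in> P \<Longrightarrow> component P E {w. reach P E x w}"
  unfolding component_def by blast

lemma component_eq_reach_class:
  assumes sym: "\<And>x y. E x y \<Longrightarrow> E y x" and "component P E C" and "x \<in> C"
  shows "x \<in> P" and "C = {w. reach P E x w}"
proof -
  obtain v where v: "v \<in> P" "C = {w. reach P E v w}"
    using assms(2) unfolding component_def by blast
  then have vx: "reach P E v x"
    using \<open>x \<in> C\<close> by blast
  show "x \<in> P"
    using reach_in_carrier[OF vx v(1)] .
  show "C = {w. reach P E x w}"
    using v vx reach_sym[OF sym vx] by (auto intro: rtranclp_trans)
qed

lemma component_subset_carrier:
  "component P E C \<Longrightarrow> C \<subseteq> P"
  unfolding component_def using reach_in_carrier by fast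

lemma component_has_edge:
  assumes "component P E C" and "card C \<ge> 2"
  shows "\<exists>x\<in>C. \<exists>y\<in>C. edge_on P E x y"
proof -
  obtain v where v: "v \<in> P" "C = {w. reach P E v w}"
    using assms(1) unfolding component_def by blast
  have "\<not> C \<subseteq> {v}"
    using card_mono[of "{v}" C] assms(2) by fastforce
  then obtain w where "reach P E v w" "w \<noteq> v"
    using v by blast
  then obtain y where "edge_on P E v y"
    by (blast elim: converse_rtranclpE)
  then show ?thesis
    using v by blast
qed

lemma incomp_sym: "incomp lt x y = incomp lt y x"
  unfolding incomp_def by auto

lemma top_rel_sym: "top_rel P lt x y \<Longrightarrow> top_rel P lt y x"
  unfolding top_rel_def by blast

lemma bot_rel_sym: "bot_rel P lt x y \<Longrightarrow> bot_rel P lt y x"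
  unfolding bot_rel_def by blast

lemma induced_2_2_swap: "induced_2_2 lt a1 a2 b1 b2 = induced_2_2 lt a2 a1 b2 b1"
  unfolding induced_2_2_def using incomp_sym by metis

lemma matched_iff_induced_2_2:
  "matched lt A B \<longleftrightarrow> (\<exists>a1\<in>A. \<exists>a2\<in>A. \<exists>b1\<in>B. \<exists>b2\<in>B. induced_2_2 lt a1 a2 b1 b2)"
  unfolding matched_def induced_2_2_def incomp_def by blast

lemma induced_2_2_bot_rel:
  "induced_2_2 lt a1 a2 b1 b2 \<Longrightarrow> a1 \<in> P \<Longrightarrow> a2 \<in> P \<Longrightarrow> bot_rel P lt b1 b2"
  unfolding induced_2_2_def bot_rel_def up_set_def incomp_def by blast

lemma top_rel_imp_induced_2_2:
  assumes sp: "strict_poset P lt" and "a1 \<in> P" "a2 \<in> P" and "top_rel P lt a1 a2"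
  shows "\<exists>b1\<in>P. \<exists>b2\<in>P. induced_2_2 lt a1 a2 b1 b2"
proof -
  obtain b1 where b1: "b1 \<in> P" "lt b1 a1" "\<not> lt b1 a2"
    using assms(4) unfolding top_rel_def down_set_def by blast
  obtain b2 where b2: "b2 \<in> P" "lt b2 a2" "\<not> lt b2 a1"
    using assms(4) unfolding top_rel_def down_set_def by blast
  have trans: "\<And>u v w. u \<in> P \<Longrightarrow> v \<in> P \<Longrightarrow> w \<in> P \<Longrightarrow> lt u v \<Longrightarrow> lt v w \<Longrightarrow> lt u w"
    using sp unfolding strict_poset_def by blast
  have "induced_2_2 lt a1 a2 b1 b2"
    unfolding induced_2_2_def incomp_def
    using b1 b2 assms(2,3) trans[of b1 a1 a2] trans[of b2 a2 a1] trans[of b1 b2 a2]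
      trans[of b2 b1 a1] trans[of a2 b1 a1] trans[of a1 b2 a2]
    by blast
  then show ?thesis
    using b1 b2 by blast
qed

lemma induced_2_2_common_top_bot_rel:
  assumes "induced_2_2 lt a a2 b1 b2" and "induced_2_2 lt a a3 c1 c2"
    and "a \<in> P" "a2 \<in> P" "a3 \<in> P"
  shows "bot_rel P lt b2 c1 \<or> bot_rel P lt b1 c2 \<or> bot_rel P lt b1 c1"
  using assms unfolding induced_2_2_def bot_rel_def up_set_def incomp_def
  by (cases "lt c1 a2") blast+

lemma induced_2_2_common_top_reach:
  assumes "induced_2_2 lt a a2 b1 b2" and "induced_2_2 lt a a3 c1 c2"
    and "{a, a2, a3, b1, b2, c1, c2} \<subseteq> P"
  shows "reach P (bot_rel P lt) b1 c1"
proof -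
  have in_P: "a \<in> P" "a2 \<in> P" "a3 \<in> P" "b1 \<in> P" "b2 \<in> P" "c1 \<in> P" "c2 \<in> P"
    using assms(3) by auto
  have b1b2: "edge_on P (bot_rel P lt) b1 b2" and c2c1: "edge_on P (bot_rel P lt) c2 c1"
    using in_P induced_2_2_bot_rel[OF assms(1), of P] induced_2_2_bot_rel[OF assms(2), of P]
      bot_rel_sym[of P lt c1 c2] by simp_all
  have "bot_rel P lt b2 c1 \<or> bot_rel P lt b1 c2 \<or> bot_rel P lt b1 c1"
    using induced_2_2_common_top_bot_rel[OF assms(1,2)] in_P by blast
  then show ?thesis
  proof (elim disjE)
    assume "bot_rel P lt b2 c1"
    then have "reach P (bot_rel P lt) b2 c1"
      using in_P by (simp add: r_into_rtranclp)
    with b1b2 show ?thesis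
      by (rule converse_rtranclp_into_rtranclp)
  next
    assume "bot_rel P lt b1 c2"
    then have "reach P (bot_rel P lt) b1 c2"
      using in_P by (simp add: r_into_rtranclp)
    then show ?thesis
      using c2c1 by (rule rtranclp.rtrancl_into_rtrancl)
  next
    assume "bot_rel P lt b1 c1"
    then show ?thesis
      using in_P by (simp add: r_into_rtranclp)
  qed
qed

lemma induced_2_2_bottoms_reach:
  assumes sp: "strict_poset P lt" and path: "reach P (top_rel P lt) a x"
    and ab: "induced_2_2 lt a a' b b'" "{a, a', b, b'} \<subseteq> P"
    and xc: "induced_2_2 lt x x' c c'" "{x', c, c'} \<subseteq> P"
  shows "reach P (bot_rel P lt) b c"
  using path xc
proof (induction arbitrary: x' c c' rule: rtranclp_induct)
  case base
  then show ?case
    using induced_2_2_common_top_reach[OF ab(1)] ab(2) by simp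
next
  case (step x z)
  then have xz: "x \<in> P" "z \<in> P" "top_rel P lt x z"
    by auto
  obtain d d' where d: "d \<in> P" "d' \<in> P" "induced_2_2 lt x z d d'"
    using top_rel_imp_induced_2_2[OF sp xz] by blast
  have bd: "reach P (bot_rel P lt) b d"
    using step.IH[OF d(3)] xz d by simp
  have dd': "edge_on P (bot_rel P lt) d d'"
    using induced_2_2_bot_rel[OF d(3) xz(1,2)] d by blast
  have d'c: "reach P (bot_rel P lt) d' c"
  proof (rule induced_2_2_common_top_reach)
    show "induced_2_2 lt z x d' d"
      using d(3) induced_2_2_swap by metis
    show "induced_2_2 lt z x' c c'" "{z, x, x', d', d, c, c'} \<subseteq> P"
      using step.prems xz d by auto
  qed
  show ?case
    using rtranclp_trans[OF bd converse_rtranclp_into_rtranclp[OF dd' d'c]] by simp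
qed

lemma tangle_top_has_matched_bottom:
  assumes "finite P" and sp: "strict_poset P lt" and "tangle_top P lt A"
  shows "\<exists>B. tangle_bottom P lt B \<and> matched lt A B"
proof -
  obtain x y where xy: "x \<in> A" "y \<in> A" "edge_on P (top_rel P lt) x y"
    using assms(3) component_has_edge unfolding tangle_top_def by blast
  then obtain b b' where b: "b \<in> P" "b' \<in> P" "induced_2_2 lt x y b b'"
    using top_rel_imp_induced_2_2[OF sp] by blast
  define B where "B = {w. reach P (bot_rel P lt) b w}"
  have "b \<in> B" "b' \<in> B"
    using induced_2_2_bot_rel[OF b(3)] xy b unfolding B_def by auto
  moreover have B: "component P (bot_rel P lt) B"
    unfolding B_def using component_reach_class b(1) .
  moreover have "card B \<ge> 2"
  proof -
    have "b \<noteq> b'"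
      using b(3) unfolding induced_2_2_def incomp_def by blast
    moreover have "finite B"
      using \<open>finite P\<close> component_subset_carrier[OF B] finite_subset by blast
    ultimately show ?thesis
      using card_mono[of B "{b, b'}"] \<open>b \<in> B\<close> \<open>b' \<in> B\<close> by simp
  qed
  ultimately have "tangle_bottom P lt B"
    unfolding tangle_bottom_def by blast
  moreover have "matched lt A B"
    unfolding matched_iff_induced_2_2 using xy \<open>b \<in> B\<close> \<open>b' \<in> B\<close> b(3) by blast
  ultimately show ?thesis
    by blast
qed

lemma matched_bottom_unique:
  assumes sp: "strict_poset P lt" and "tangle_top P lt A"
    and "tangle_bottom P lt B" "matched lt A B"
    and "tangle_bottom P lt B'" "matched lt A B'"
  shows "B = B'"
proof -
  have A: "component P (top_rel P lt) A" and B: "component P (bot_rel P lt) B"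
    and B': "component P (bot_rel P lt) B'"
    using assms unfolding tangle_top_def tangle_bottom_def by blast+
  obtain a1 a2 b1 b2 where ab: "a1 \<in> A" "a2 \<in> A" "b1 \<in> B" "b2 \<in> B" "induced_2_2 lt a1 a2 b1 b2"
    using assms(4) unfolding matched_iff_induced_2_2 by blast
  obtain c1 c2 x x' where xc: "x \<in> A" "x' \<in> A" "c1 \<in> B'" "c2 \<in> B'" "induced_2_2 lt x x' c1 c2"
    using assms(6) unfolding matched_iff_induced_2_2 by blast
  have a1x: "reach P (top_rel P lt) a1 x"
    using component_eq_reach_class(2)[OF top_rel_sym A ab(1)] xc(1) by blast
  have "A \<subseteq> P" "B \<subseteq> P" "B' \<subseteq> P"
    using A B B' component_subset_carrier by blast+
  then have "reach P (bot_rel P lt) b1 c1"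
    using induced_2_2_bottoms_reach[OF sp a1x ab(5) _ xc(5)] ab(1-4) xc(2-4) by (simp add: subset_iff)
  then have "c1 \<in> B"
    using component_eq_reach_class(2)[OF bot_rel_sym B ab(3)] by blast
  then have "B = {w. reach P (bot_rel P lt) c1 w}"
    using component_eq_reach_class(2)[OF bot_rel_sym B] by blast
  moreover have "B' = {w. reach P (bot_rel P lt) c1 w}"
    using component_eq_reach_class(2)[OF bot_rel_sym B' xc(3)] .
  ultimately show ?thesis
    by simp
qed

lemma tangle_top_unique_matched_bottom:
  assumes "finite P" and "strict_poset P lt" and "tangle_top P lt A"
  shows "\<exists>!B. tangle_bottom P lt B \<and> matched lt A B"
  using tangle_top_has_matched_bottom[OF assms] matched_bottom_unique[OF assms(2,3)] by blast

lemma strict_poset_conversep: "strict_poset P lt \<Longrightarrow> strict_poset P lt\<inverse>\<inverse>"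
  unfolding strict_poset_def conversep_iff by blast

lemma top_rel_conversep: "top_rel P lt\<inverse>\<inverse> = bot_rel P lt"
  unfolding top_rel_def bot_rel_def down_set_def up_set_def conversep_iff ..

lemma bot_rel_conversep: "bot_rel P lt\<inverse>\<inverse> = top_rel P lt"
  unfolding top_rel_def bot_rel_def down_set_def up_set_def conversep_iff ..

lemma tangle_top_conversep: "tangle_top P lt\<inverse>\<inverse> = tangle_bottom P lt"
  unfolding tangle_top_def tangle_bottom_def top_rel_conversep ..

lemma tangle_bottom_conversep: "tangle_bottom P lt\<inverse>\<inverse> = tangle_top P lt"
  unfolding tangle_top_def tangle_bottom_def bot_rel_conversep ..

lemma matched_conversep: "matched lt\<inverse>\<inverse> A B = matched lt B A"
  unfolding matched_def incomp_def conversep_iff by blast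

theorem proposition2p7:
  fixes P :: "'a set" and lt :: "'a \<Rightarrow> 'a \<Rightarrow> bool"
  assumes "finite P" and "strict_poset P lt" and "three_one_free P lt"
  shows "(\<forall>A. tangle_top P lt A \<longrightarrow> (\<exists>!B. tangle_bottom P lt B \<and> matched lt A B)) \<and>
         (\<forall>B. tangle_bottom P lt B \<longrightarrow> (\<exists>!A. tangle_top P lt A \<and> matched lt A B))"
proof (intro conjI allI impI)
  fix A
  assume "tangle_top P lt A"
  then show "\<exists>!B. tangle_bottom P lt B \<and> matched lt A B"
    using tangle_top_unique_matched_bottom assms(1,2) by blast
next
  fix B
  assume "tangle_bottom P lt B"
  then have "tangle_top P lt\<inverse>\<inverse> B"
    by (simp add: tangle_top_conversep)
  from tangle_top_unique_matched_bottom[OF assms(1) strict_poset_conversep[OF assms(2)] this]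
  show "\<exists>!A. tangle_top P lt A \<and> matched lt A B"
    by (simp add: tangle_bottom_conversep matched_conversep)
qed

end
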